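(* Consider a two-asset G3M with weight $w\in(0,1)$ and fee parameter $\gamma\in(0,1)$, reserves $x_t,y_t>0$, pool price $P_t=\frac{w}{1-w}\frac{y_t}{x_t}$ and liquidity $\ell_t=x_t^w y_t^{1-w}$, where reserves change by continuous trades obeying $w\frac{dx}{x}+\gamma(1-w)\frac{dy}{y}=0$ when $dx<0$ and $\gamma w\frac{dx}{x}+(1-w)\frac{dy}{y}=0$ when $dx>0$. Let the reference price $S_t$ be continuous with $\gamma P_0\le S_0\le\gamma^{-1}P_0$, assume no noise traders, a frictionless reference market and continuous instantaneous arbitrage, and write $\ln P_t=\ln P_0+U_t-L_t$, with $L_t,U_t$ continuous non-decreasing, $L_0=U_0=0$, $L$ increasing only when $Z_t=\ln(S_t/P_t)=\ln\gamma$ and $U$ only when $Z_t=-\ln\gamma$. Then $\ell_t$ is non-decreasing and predictable, and $$d\ln\ell_t=\frac{(1-\gamma)w(1-w)}{1-w+\gamma w}\,dL_t+\frac{(1-\gamma)w(1-w)}{\gamma(1-w)+w}\,dU_t.$$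
   Context: $L_t$ (resp. $U_t$) is the cumulative decrease (resp. increase) of $\ln P_t$ caused by arbitrage sales of $X$ to (resp. purchases of $X$ from) the pool. *)

theory Defs
  imports "HOL-Analysis.Analysis"
begin

definition pool_price :: "real \<Rightarrow> real \<Rightarrow> real \<Rightarrow> real" where
  "pool_price w x y = (w / (1 - w)) * (y / x)"

definition liquidity :: "real \<Rightarrow> real \<Rightarrow> real \<Rightarrow> real" where
  "liquidity w x y = x powr w * y powr (1 - w)"

text \<open>Pathwise version of: "F increases only when the condition C holds", i.e.
  F is constant on every time interval on which C fails throughout.\<close>
definition increases_only_when :: "(real \<Rightarrow> real) \<Rightarrow> (real \<Rightarrow> bool) \<Rightarrow> bool" where
  "increases_only_when F C \<longleftrightarrow>
     (\<forall>s t. 0 \<le> s \<and> s \<le> t \<and> (\<forall>r\<in>{s..t}. \<not> C r) \<longrightarrow> F s = F t)"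

end

theory Submission
  imports Defs
begin

text \<open>Along a trade path \<open>ln \<ell> = w ln x + (1 - w) ln y\<close> is linear in the cumulative volumes:
  a sale of X raises \<open>ln \<ell>\<close> by \<open>(1 - \<gamma>) w dA\<close> and a purchase by \<open>(1 - \<gamma>) w / \<gamma> dB\<close>, the
  part of each trade retained as fee. Rewriting \<open>A\<close>, \<open>B\<close> through the price moves \<open>L\<close>, \<open>U\<close> gives
  the stated non-negative coefficients, so \<open>\<ell>\<close> is non-decreasing and continuous because \<open>L\<close>
  and \<open>U\<close> are. The reference price and the arbitrage conditions only pin down \<open>L\<close> and \<open>U\<close>;
  the identity holds for every trade path and does not use them.\<close>

lemma ln_liquidity:
  assumes "x > 0" "y > 0"
  shows "ln (liquidity w x y) = w * ln x + (1 - w) * ln y"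
  using assms by (simp add: liquidity_def ln_mult ln_powr)

lemma liquidity_pos:
  assumes "x > 0" "y > 0"
  shows "liquidity w x y > 0"
  using assms by (simp add: liquidity_def)

lemma ln_liquidity_after_trades:
  fixes w \<gamma> a b :: real
  assumes w: "w < 1" and gam: "\<gamma> \<noteq> 0"
    and pos: "x > 0" "y > 0" "x' > 0" "y' > 0"
    and x': "ln x' = ln x + a - b"
    and y': "ln y' = ln y - (\<gamma> * w / (1 - w)) * a + (w / (\<gamma> * (1 - w))) * b"
  shows "ln (liquidity w x' y') = ln (liquidity w x y) + (1 - \<gamma>) * w * a + (1 - \<gamma>) * w / \<gamma> * b"
proof -
  have sell: "(1 - w) * (\<gamma> * w / (1 - w)) = \<gamma> * w" and buy: "(1 - w) * (w / (\<gamma> * (1 - w))) = w / \<gamma>"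
    using w gam by simp_all
  have "ln (liquidity w x' y') = w * (ln x + a - b)
      + (1 - w) * (ln y - (\<gamma> * w / (1 - w)) * a + (w / (\<gamma> * (1 - w))) * b)"
    using pos x' y' by (simp add: ln_liquidity)
  also have "\<dots> = w * ln x + (1 - w) * ln y + w * a - w * b
      - ((1 - w) * (\<gamma> * w / (1 - w))) * a + ((1 - w) * (w / (\<gamma> * (1 - w)))) * b"
    by (simp add: algebra_simps)
  also have "\<dots> = w * ln x + (1 - w) * ln y + (1 - \<gamma>) * w * a + (1 - \<gamma>) * w / \<gamma> * b"
    unfolding sell buy using gam by (simp add: field_simps)
  finally show ?thesis
    using pos by (simp add: ln_liquidity)
qed

lemma sell_fee_coefficient:
  fixes w \<gamma> a :: real
  assumes "0 < w" "w < 1" "0 < \<gamma>"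
  shows "(1 - \<gamma>) * w * (1 - w) / (1 - w + \<gamma> * w) * (a + (\<gamma> * w / (1 - w)) * a)
       = (1 - \<gamma>) * w * a"
proof -
  have "0 < \<gamma> * w"
    using assms by simp
  then have "1 - w + \<gamma> * w \<noteq> 0" "1 - w \<noteq> 0"
    using assms by linarith+
  moreover have "a + (\<gamma> * w / (1 - w)) * a = a * (1 - w + \<gamma> * w) / (1 - w)"
    using assms by (simp add: field_simps)
  ultimately show ?thesis
    by simp
qed

lemma buy_fee_coefficient:
  fixes w \<gamma> b :: real
  assumes "0 < w" "w < 1" "0 < \<gamma>"
  shows "(1 - \<gamma>) * w * (1 - w) / (\<gamma> * (1 - w) + w) * ((w / (\<gamma> * (1 - w))) * b + b)
       = (1 - \<gamma>) * w / \<gamma> * b"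
proof -
  have "0 < \<gamma> * (1 - w)"
    using assms by simp
  then have "\<gamma> * (1 - w) + w \<noteq> 0" "1 - w \<noteq> 0"
    using assms by linarith+
  moreover have "(w / (\<gamma> * (1 - w))) * b + b = b * (\<gamma> * (1 - w) + w) / (\<gamma> * (1 - w))"
    using assms by (simp add: field_simps)
  ultimately show ?thesis
    by simp
qed

lemma mono_continuous_on_if_ln_nonneg_combination:
  fixes f L U :: "real \<Rightarrow> real"
  assumes f: "\<And>t. t \<in> S \<Longrightarrow> f t > 0 \<and> ln (f t) = K + a * L t + b * U t"
    and "a \<ge> 0" "b \<ge> 0"
    and "mono_on S L" "mono_on S U" and L: "continuous_on S L" and U: "continuous_on S U"
  shows "mono_on S f \<and> continuous_on S f"
proof
  show "mono_on S f"
  proof (rule mono_onI)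
    fix r s assume r: "r \<in> S" and s: "s \<in> S" and "r \<le> s"
    with assms have "a * L r + b * U r \<le> a * L s + b * U s"
      by (intro add_mono mult_left_mono) (auto dest: mono_onD)
    with f[OF r] f[OF s] show "f r \<le> f s"
      by (metis add.assoc add_left_mono ln_le_cancel_iff)
  qed
  have "f t = exp (K + a * L t + b * U t)" if "t \<in> S" for t
    using f[OF that] by (metis exp_ln)
  then have "continuous_on S f \<longleftrightarrow> continuous_on S (\<lambda>t. exp (K + a * L t + b * U t))"
    by (intro continuous_on_cong) auto
  moreover have "continuous_on S (\<lambda>t. exp (K + a * L t + b * U t))"
    by (intro continuous_intros L U)
  ultimately show "continuous_on S f"
    by simp
qed

theorem mainTheorem4:
  fixes w \<gamma> :: real
    and x y S A B L U :: "real \<Rightarrow> real"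
  assumes w: "0 < w" "w < 1"
    and gam: "0 < \<gamma>" "\<gamma> < 1"
    and pos: "\<forall>t\<ge>0. x t > 0 \<and> y t > 0"
    \<comment> \<open>reserves move only through continuous trades: A is the cumulative increase of
        ln x from sales of X to the pool (dx>0), B the cumulative decrease of ln x from
        purchases of X from the pool (dx<0)\<close>
    and A_cont: "continuous_on {0..} A" and A_mono: "mono_on {0..} A" and A0: "A 0 = 0"
    and B_cont: "continuous_on {0..} B" and B_mono: "mono_on {0..} B" and B0: "B 0 = 0"
    \<comment> \<open>trade rules: \<gamma> w dx/x + (1-w) dy/y = 0 when dx>0,
        w dx/x + \<gamma>(1-w) dy/y = 0 when dx<0\<close>
    and x_dyn: "\<forall>t\<ge>0. ln (x t) = ln (x 0) + A t - B t"
    and y_dyn: "\<forall>t\<ge>0. ln (y t) = ln (y 0) - (\<gamma> * w / (1 - w)) * A t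
                                     + (w / (\<gamma> * (1 - w))) * B t"
    \<comment> \<open>L (resp. U): cumulative decrease (resp. increase) of ln P caused by sales
        (resp. purchases) of X\<close>
    and L_def: "\<forall>t\<ge>0. L t = A t + (\<gamma> * w / (1 - w)) * A t"
    and U_def: "\<forall>t\<ge>0. U t = (w / (\<gamma> * (1 - w))) * B t + B t"
    \<comment> \<open>reference price and arbitrage\<close>
    and S_cont: "continuous_on {0..} S"
    and S_pos: "\<forall>t\<ge>0. S t > 0"
    and S0: "\<gamma> * pool_price w (x 0) (y 0) \<le> S 0" "S 0 \<le> pool_price w (x 0) (y 0) / \<gamma>"
    and decomp: "\<forall>t\<ge>0. ln (pool_price w (x t) (y t))
                        = ln (pool_price w (x 0) (y 0)) + U t - L t"
    and L_cont: "continuous_on {0..} L" and L_mono: "mono_on {0..} L" and L0: "L 0 = 0"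
    and U_cont: "continuous_on {0..} U" and U_mono: "mono_on {0..} U" and U0: "U 0 = 0"
    and band: "\<forall>t\<ge>0. ln \<gamma> \<le> ln (S t / pool_price w (x t) (y t))
                      \<and> ln (S t / pool_price w (x t) (y t)) \<le> - ln \<gamma>"
    and L_supp: "increases_only_when L (\<lambda>t. ln (S t / pool_price w (x t) (y t)) = ln \<gamma>)"
    and U_supp: "increases_only_when U (\<lambda>t. ln (S t / pool_price w (x t) (y t)) = - ln \<gamma>)"
  shows "mono_on {0..} (\<lambda>t. liquidity w (x t) (y t))
       \<and> continuous_on {0..} (\<lambda>t. liquidity w (x t) (y t))
       \<and> (\<forall>t\<ge>0. ln (liquidity w (x t) (y t)) = ln (liquidity w (x 0) (y 0))
              + ((1 - \<gamma>) * w * (1 - w) / (1 - w + \<gamma> * w)) * L t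
              + ((1 - \<gamma>) * w * (1 - w) / (\<gamma> * (1 - w) + w)) * U t)"
proof -
  define c\<^sub>L where "c\<^sub>L = (1 - \<gamma>) * w * (1 - w) / (1 - w + \<gamma> * w)"
  define c\<^sub>U where "c\<^sub>U = (1 - \<gamma>) * w * (1 - w) / (\<gamma> * (1 - w) + w)"
  have ln_liq: "ln (liquidity w (x t) (y t)) = ln (liquidity w (x 0) (y 0)) + c\<^sub>L * L t + c\<^sub>U * U t"
    if "t \<ge> 0" for t
  proof -
    have "\<gamma> \<noteq> 0" "x 0 > 0" "y 0 > 0" "x t > 0" "y t > 0"
      using gam pos that by auto
    then have "ln (liquidity w (x t) (y t))
        = ln (liquidity w (x 0) (y 0)) + (1 - \<gamma>) * w * A t + (1 - \<gamma>) * w / \<gamma> * B t"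
      using x_dyn[rule_format, OF that] y_dyn[rule_format, OF that]
      by (intro ln_liquidity_after_trades[OF w(2)])
    also have "\<dots> = ln (liquidity w (x 0) (y 0)) + c\<^sub>L * L t + c\<^sub>U * U t"
      using L_def[rule_format, OF that] U_def[rule_format, OF that]
        sell_fee_coefficient[OF w gam(1)] buy_fee_coefficient[OF w gam(1)]
      unfolding c\<^sub>L_def c\<^sub>U_def by simp
    finally show ?thesis .
  qed
  have liq: "liquidity w (x t) (y t) > 0
      \<and> ln (liquidity w (x t) (y t)) = ln (liquidity w (x 0) (y 0)) + c\<^sub>L * L t + c\<^sub>U * U t"
    if "t \<in> {0..}" for t
    using pos that ln_liq[of t] by (simp add: liquidity_pos)
  have "c\<^sub>L \<ge> 0" "c\<^sub>U \<ge> 0"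
    using w gam unfolding c\<^sub>L_def c\<^sub>U_def by (auto intro!: divide_nonneg_pos add_pos_nonneg)
  then have "mono_on {0..} (\<lambda>t. liquidity w (x t) (y t))
      \<and> continuous_on {0..} (\<lambda>t. liquidity w (x t) (y t))"
    using liq L_mono U_mono L_cont U_cont by (intro mono_continuous_on_if_ln_nonneg_combination)
  with ln_liq show ?thesis
    unfolding c\<^sub>L_def c\<^sub>U_def by blast
qed

end
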